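(* Let $n\ge2$, $\sigma\in\mathrm{NC}_n$ and $1\le i<n$. Then $\sigma s_i\in\mathrm{NC}_n$ if and only if $i\in\{\sigma(i),\sigma(i+1)\}$.
   Context: $s_i=(i,i+1)$ and $\sigma s_i$ denotes the composition $\sigma\circ s_i$. A set partition of $[n]$ is noncrossing if there are no distinct blocks $P,Q$ with $a,b\in P$, $c,d\in Q$, $a<c<b<d$. To a noncrossing partition associate the permutation $\sigma\in S_n$ which on each block $\{a_1<\dots<a_p\}$ acts by $\sigma(a_j)=a_{j-1}$ ($j\ge2$) and $\sigma(a_1)=a_p$. $\mathrm{NC}_n$ is the set of such permutations (noncrossing permutations); their cycles are the blocks. *)

theory Defs
  imports "HOL-Combinatorics.Transposition" "HOL-Library.Disjoint_Sets"
begin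

definition noncrossing :: "nat set set \<Rightarrow> bool" where
  "noncrossing P \<longleftrightarrow>
     (\<forall>B\<in>P. \<forall>C\<in>P. B \<noteq> C \<longrightarrow>
        \<not> (\<exists>a b c d. a \<in> B \<and> b \<in> B \<and> c \<in> C \<and> d \<in> C \<and> a < c \<and> c < b \<and> b < d))"

definition nc_partition :: "nat \<Rightarrow> nat set set \<Rightarrow> bool" where
  "nc_partition n P \<longleftrightarrow> partition_on {1..n} P \<and> noncrossing P"

definition part_perm :: "nat \<Rightarrow> nat set set \<Rightarrow> nat \<Rightarrow> nat" where
  "part_perm n P x =
     (if x \<in> {1..n} then
        (let B = (THE B. B \<in> P \<and> x \<in> B) in
           if x = Min B then Max B else Max {y \<in> B. y < x})
      else x)"

definition NC :: "nat \<Rightarrow> (nat \<Rightarrow> nat) set" where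
  "NC n = {part_perm n P | P. nc_partition n P}"

definition s :: "nat \<Rightarrow> nat \<Rightarrow> nat" where
  "s i = transpose i (i + 1)"

end

theory Submission
  imports Defs
begin

(* On each block, part_perm n P steps down to the next smaller element and wraps around from
   the minimum to the maximum, so the blocks are exactly its cycles.
   If \<sigma> i = i, then {i} is a block and \<sigma> s_i is the permutation of the partition obtained by
   merging {i} into the block of i+1. If \<sigma> (i+1) = i, splitting i off its block gives a
   partition whose permutation composed with s_i is \<sigma>, so \<sigma> s_i is that permutation.
   Both operations preserve noncrossingness because i and i+1 are adjacent.
   Conversely, suppose \<tau> = \<sigma> s_i is noncrossing while \<sigma> i \<noteq> i and \<sigma> (i+1) \<noteq> i. Then i is
   not in the \<sigma>-block C of i+1, so \<tau> agrees with \<sigma> on C except at i+1. Following the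
   \<sigma>-cycle of C from \<sigma> (i+1) = \<tau> i stays in the \<tau>-block of i until it reaches i+1.
   So i and i+1 share a \<tau>-block, whence \<sigma> i = \<tau> (i+1) = i, a contradiction. *)

definition merge_blocks :: "'a set set \<Rightarrow> 'a set \<Rightarrow> 'a set \<Rightarrow> 'a set set" where
  "merge_blocks P X Y = insert (X \<union> Y) (P - {X, Y})"

definition split_block :: "'a set set \<Rightarrow> 'a set \<Rightarrow> 'a set \<Rightarrow> 'a set set" where
  "split_block P B C = insert C (insert (B - C) (P - {B}))"

lemma partition_on_disjnt:
  "partition_on A P \<Longrightarrow> X \<in> P \<Longrightarrow> Y \<in> P \<Longrightarrow> X \<noteq> Y \<Longrightarrow> disjnt X Y"
  by (auto simp: partition_on_def pairwise_def)

lemma partition_on_block_eq: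
  "partition_on A P \<Longrightarrow> X \<in> P \<Longrightarrow> Y \<in> P \<Longrightarrow> x \<in> X \<Longrightarrow> x \<in> Y \<Longrightarrow> X = Y"
  using partition_on_disjnt disjnt_iff by metis

lemma partition_on_the_block:
  "partition_on A P \<Longrightarrow> B \<in> P \<Longrightarrow> x \<in> B \<Longrightarrow> (THE B. B \<in> P \<and> x \<in> B) = B"
  by (rule the_equality) (auto dest: partition_on_block_eq)

lemma partition_on_block_exists: "partition_on A P \<Longrightarrow> x \<in> A \<Longrightarrow> \<exists>B\<in>P. x \<in> B"
  by (auto dest: partition_onD1)

lemma partition_on_finite_block:
  assumes "finite A" "partition_on A P" "B \<in> P"
  shows "finite B"
proof -
  have "B \<subseteq> A"
    using assms(2,3) partition_onD1 by blast
  then show ?thesis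
    using assms(1) by (rule finite_subset)
qed

lemma partition_on_merge_blocks:
  assumes P: "partition_on A P" and X: "X \<in> P" and Y: "Y \<in> P"
  shows "partition_on A (merge_blocks P X Y)"
  unfolding partition_on_def
proof (intro conjI)
  have "\<Union>(merge_blocks P X Y) = \<Union>P"
    using X Y unfolding merge_blocks_def by blast
  then show "\<Union>(merge_blocks P X Y) = A"
    using partition_onD1[OF P] by simp
  have "disjnt (X \<union> Y) r" if "r \<in> P - {X, Y}" for r
    using that partition_on_disjnt[OF P X] partition_on_disjnt[OF P Y] by auto
  moreover have "disjoint (P - {X, Y})"
    using partition_onD2[OF P] by (rule pairwise_subset) blast
  ultimately show "disjoint (merge_blocks P X Y)"
    unfolding merge_blocks_def pairwise_insert by (auto simp: disjnt_sym)
  show "{} \<notin> merge_blocks P X Y"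
    using partition_onD3[OF P] X unfolding merge_blocks_def by auto
qed

lemma partition_on_split_block:
  assumes P: "partition_on A P" and B: "B \<in> P" and C: "C \<subseteq> B" "C \<noteq> {}" "C \<noteq> B"
  shows "partition_on A (split_block P B C)"
  unfolding partition_on_def
proof (intro conjI)
  have "\<Union>(split_block P B C) = \<Union>P"
    using B C unfolding split_block_def by blast
  then show "\<Union>(split_block P B C) = A"
    using partition_onD1[OF P] by simp
  have "disjnt C r" "disjnt r C" "disjnt (B - C) r" "disjnt r (B - C)" if "r \<in> P - {B}" for r
    using partition_on_disjnt[OF P B, of r] that C(1) by (auto simp: disjnt_def)
  moreover have "disjoint (P - {B})"
    using partition_onD2[OF P] by (rule pairwise_subset) blast
  moreover have "disjnt C (B - C)" "disjnt (B - C) C"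
    by (auto simp: disjnt_def)
  ultimately show "disjoint (split_block P B C)"
    unfolding split_block_def pairwise_insert by blast
  show "{} \<notin> split_block P B C"
    using partition_onD3[OF P] C unfolding split_block_def by auto
qed

lemma merge_split_block:
  assumes P: "partition_on A P" and B: "B \<in> P" and C: "C \<subseteq> B" "C \<noteq> {}" "C \<noteq> B"
  shows "merge_blocks (split_block P B C) C (B - C) = P"
proof -
  have "C \<notin> P - {B}" "B - C \<notin> P - {B}"
    using partition_on_disjnt[OF P B] C by (auto simp: disjnt_iff)
  moreover have "C \<union> (B - C) = B"
    using C(1) by blast
  ultimately show ?thesis
    using B unfolding merge_blocks_def split_block_def by auto
qed

definition crosses :: "'a::order set \<Rightarrow> 'a set \<Rightarrow> bool" where
  "crosses X Y \<longleftrightarrow> (\<exists>a b c d. a \<in> X \<and> b \<in> X \<and> c \<in> Y \<and> d \<in> Y \<and> a < c \<and> c < b \<and> b < d)"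

lemma noncrossing_iff_not_crosses:
  "noncrossing P \<longleftrightarrow> (\<forall>X\<in>P. \<forall>Y\<in>P. X \<noteq> Y \<longrightarrow> \<not> crosses X Y)"
  unfolding noncrossing_def crosses_def ..

lemma crosses_mono: "crosses X Y \<Longrightarrow> X \<subseteq> X' \<Longrightarrow> Y \<subseteq> Y' \<Longrightarrow> crosses X' Y'"
  unfolding crosses_def by blast

lemma not_crosses_singleton: "\<not> crosses {x} Y" "\<not> crosses X {y}"
  unfolding crosses_def by auto

lemma crosses_image:
  assumes "crosses X Y"
    and "\<And>u v. u \<in> X \<Longrightarrow> v \<in> Y \<Longrightarrow> u < v \<Longrightarrow> g u < g v"
    and "\<And>u v. u \<in> X \<Longrightarrow> v \<in> Y \<Longrightarrow> v < u \<Longrightarrow> g v < g u"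
  shows "crosses (g ` X) (g ` Y)"
  using assms unfolding crosses_def by blast

lemma crosses_image_shift_to_Suc:
  fixes i :: nat
  assumes "crosses X Y" "\<not> (i \<in> X \<and> Suc i \<in> Y)" "\<not> (i \<in> Y \<and> Suc i \<in> X)"
  shows "crosses ((\<lambda>x. if x = i then Suc i else x) ` X) ((\<lambda>x. if x = i then Suc i else x) ` Y)"
  by (rule crosses_image[OF assms(1)]) (use assms(2,3) in \<open>auto intro: Suc_lessI\<close>)

lemma noncrossing_split_singleton:
  assumes "noncrossing P" "B \<in> P"
  shows "noncrossing (split_block P B {x})"
  unfolding noncrossing_iff_not_crosses
proof (intro ballI impI notI)
  fix X Y assume X: "X \<in> split_block P B {x}" and Y: "Y \<in> split_block P B {x}"
    and "X \<noteq> Y" and XY: "crosses X Y"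
  then have "X \<noteq> {x}" "Y \<noteq> {x}"
    using not_crosses_singleton by blast+
  then obtain X' Y' where "X' \<in> P" "Y' \<in> P" "X' \<noteq> Y'" "X \<subseteq> X'" "Y \<subseteq> Y'"
    using X Y \<open>X \<noteq> Y\<close> \<open>B \<in> P\<close> unfolding split_block_def by blast
  then show False
    using assms(1) crosses_mono[OF XY] unfolding noncrossing_iff_not_crosses by blast
qed

lemma noncrossing_merge_adjacent:
  assumes P: "partition_on A P" and nc: "noncrossing P"
    and i: "{i} \<in> P" and C: "C \<in> P" "Suc i \<in> C"
  shows "noncrossing (merge_blocks P {i} C)"
  unfolding noncrossing_iff_not_crosses
proof (intro ballI impI notI)
  \<comment> \<open>Renaming i to Suc i maps the blocks of the merged partition injectively to blocks of P
    and preserves the order between elements of different blocks, so it transports crossings.\<close>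
  define g where "g x = (if x = i then Suc i else x)" for x
  have iC: "i \<notin> C"
    using partition_on_block_eq[OF P i C(1)] C(2) by auto
  have other: "i \<notin> E" "Suc i \<notin> E" if "E \<in> P - {{i}, C}" for E
    using partition_on_block_eq[OF P, of E] i C that by auto
  have g_id: "g ` E = E" if "i \<notin> E" for E
    using that unfolding g_def by (auto cong: image_cong)
  have "g ` insert i C = C"
    using g_id[OF iC] C(2) by (simp add: g_def[of i] insert_absorb)
  moreover have blocks: "X = insert i C \<or> X \<in> P - {{i}, C}" if "X \<in> merge_blocks P {i} C" for X
    using that unfolding merge_blocks_def by simp
  ultimately have g_block: "X = insert i C \<and> g ` X = C \<or> X \<in> P - {{i}, C} \<and> g ` X = X"
    if "X \<in> merge_blocks P {i} C" for X
    using blocks[OF that] g_id other(1) by metis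
  have merged: "X = insert i C" if "X \<in> merge_blocks P {i} C" "i \<in> X \<or> Suc i \<in> X" for X
    using blocks[OF that(1)] other that(2) by metis
  fix X Y assume X: "X \<in> merge_blocks P {i} C" and Y: "Y \<in> merge_blocks P {i} C"
    and "X \<noteq> Y" and XY: "crosses X Y"
  have "crosses (g ` X) (g ` Y)"
    unfolding g_def using crosses_image_shift_to_Suc[OF XY] merged[OF X] merged[OF Y] \<open>X \<noteq> Y\<close>
    by blast
  moreover have "g ` X \<in> P" "g ` Y \<in> P"
    using g_block[OF X] g_block[OF Y] C(1) by (metis DiffD1)+
  moreover have "g ` X \<noteq> g ` Y"
    using g_block[OF X] g_block[OF Y] \<open>X \<noteq> Y\<close> by (metis DiffE insertCI)
  ultimately show False
    using nc unfolding noncrossing_iff_not_crosses by meson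
qed

definition cyclic_pred :: "nat set \<Rightarrow> nat \<Rightarrow> nat" where
  "cyclic_pred B x = (if x = Min B then Max B else Max {y \<in> B. y < x})"

lemma cyclic_pred_Min: "cyclic_pred B (Min B) = Max B"
  by (simp add: cyclic_pred_def)

lemma cyclic_pred_below:
  assumes B: "finite B" "x \<in> B" and x: "x \<noteq> Min B"
  shows "cyclic_pred B x \<in> B" "cyclic_pred B x < x"
    and "\<And>z. z \<in> B \<Longrightarrow> z < x \<Longrightarrow> z \<le> cyclic_pred B x"
proof -
  have "Min B < x"
    using B x by (simp add: order_neq_le_trans)
  moreover have "B \<noteq> {}"
    using B by auto
  ultimately have "Min B \<in> {y \<in> B. y < x}"
    using B by simp
  then have "Max {y \<in> B. y < x} \<in> {y \<in> B. y < x}"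
    using B by (intro Max_in) auto
  then show "cyclic_pred B x \<in> B" "cyclic_pred B x < x"
    using x by (simp_all add: cyclic_pred_def)
  show "z \<le> cyclic_pred B x" if "z \<in> B" "z < x" for z
    using B x that by (simp add: cyclic_pred_def)
qed

lemma cyclic_pred_in:
  assumes "finite B" "x \<in> B"
  shows "cyclic_pred B x \<in> B"
proof -
  have "B \<noteq> {}"
    using assms by auto
  then show ?thesis
    using assms cyclic_pred_below(1)[OF assms] by (cases "x = Min B") (auto simp: cyclic_pred_Min)
qed

lemma cyclic_pred_eqI:
  assumes B: "finite B" "x \<in> B" and y: "y \<in> B" "y < x"
    and greatest: "\<And>z. z \<in> B \<Longrightarrow> z < x \<Longrightarrow> z \<le> y"
  shows "cyclic_pred B x = y"
proof -
  have "Min B \<le> y"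
    using B y by simp
  then have "x \<noteq> Min B"
    using y by auto
  moreover have "Max {z \<in> B. z < x} = y"
    using B y greatest by (intro Max_eqI) auto
  ultimately show ?thesis
    by (simp add: cyclic_pred_def)
qed

lemma cyclic_pred_Suc: "finite B \<Longrightarrow> i \<in> B \<Longrightarrow> Suc i \<in> B \<Longrightarrow> cyclic_pred B (Suc i) = i"
  by (rule cyclic_pred_eqI) auto

lemma cyclic_pred_fixed:
  assumes B: "finite B" "x \<in> B" and fixed: "cyclic_pred B x = x"
  shows "B = {x}"
proof -
  have "x = Min B"
    using cyclic_pred_below(2)[OF B] fixed by fastforce
  moreover have "Max B = x"
    using fixed \<open>x = Min B\<close> by (simp add: cyclic_pred_Min)
  ultimately have "z = x" if "z \<in> B" for z
    using Min_le[OF B(1) that] Max_ge[OF B(1) that] by simp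
  then show ?thesis
    using B(2) by blast
qed

lemma Max_insert_le_member:
  assumes "finite C" "y \<in> C" "x \<le> y"
  shows "Max (insert x C) = Max C"
proof -
  have "x \<le> Max C"
    using assms(3) Max_ge[OF assms(1,2)] by (rule order_trans)
  moreover have "C \<noteq> {}"
    using assms(2) by auto
  ultimately show ?thesis
    using assms(1) by (simp add: max_absorb2)
qed

lemma cyclic_pred_insert_adjacent:
  assumes C: "finite C" "i \<notin> C" "Suc i \<in> C"
  shows "cyclic_pred (insert i C) i = cyclic_pred C (Suc i)"
proof (cases "Suc i = Min C")
  case True
  have "C \<noteq> {}"
    using C by auto
  then have "Min (insert i C) = i"
    using C True[symmetric] by simp
  moreover have "Max (insert i C) = Max C"
    using C by (intro Max_insert_le_member) auto
  ultimately show ?thesis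
    using True by (metis cyclic_pred_Min)
next
  case False
  let ?y = "cyclic_pred C (Suc i)"
  have y: "?y \<in> C" "?y < Suc i" "\<And>z. z \<in> C \<Longrightarrow> z < Suc i \<Longrightarrow> z \<le> ?y"
    using cyclic_pred_below[OF C(1,3)] False by auto
  then show ?thesis
    using C by (intro cyclic_pred_eqI) (auto simp: less_Suc_eq)
qed

lemma cyclic_pred_insert_adjacent_other:
  assumes C: "finite C" "i \<notin> C" "Suc i \<in> C" and x: "x \<in> C" "x \<noteq> Suc i"
  shows "cyclic_pred (insert i C) x = cyclic_pred C x"
proof (cases "x = Min C")
  case True
  moreover have "x \<noteq> i"
    using x C(2) by auto
  ultimately have "x < i"
    using C x Min_le[of C "Suc i"] by (auto simp: le_Suc_eq)
  moreover have "C \<noteq> {}"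
    using C by auto
  ultimately have "Min (insert i C) = x"
    using C True[symmetric] by simp
  moreover have "Max (insert i C) = Max C"
    using C by (intro Max_insert_le_member) auto
  ultimately show ?thesis
    using True by (metis cyclic_pred_Min)
next
  case False
  let ?y = "cyclic_pred C x"
  have y: "?y \<in> C" "?y < x" "\<And>z. z \<in> C \<Longrightarrow> z < x \<Longrightarrow> z \<le> ?y"
    using cyclic_pred_below[OF C(1) x(1) False] by auto
  have "Suc i \<le> ?y" if "i < x"
    using that x C(2) y(3)[OF C(3)] by (metis Suc_lessI)
  then show ?thesis
    using C x y by (intro cyclic_pred_eqI) (auto simp: Suc_le_eq)
qed

lemma s_apply: "s i i = Suc i" "s i (Suc i) = i" "x \<noteq> i \<Longrightarrow> x \<noteq> Suc i \<Longrightarrow> s i x = x"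
  by (simp_all add: s_def)

lemma cyclic_pred_insert_adjacent_eq:
  assumes C: "finite C" "i \<notin> C" "Suc i \<in> C" and x: "x \<in> insert i C"
  shows "cyclic_pred (insert i C) x = (if x = Suc i then i else cyclic_pred C (s i x))"
  using x C cyclic_pred_insert_adjacent[OF C] cyclic_pred_insert_adjacent_other[OF C, of x]
    cyclic_pred_Suc[of "insert i C" i] by (cases "x = i") (auto simp: s_apply)

lemma cyclic_pred_reaches_below:
  assumes B: "finite B" "y \<in> B"
  shows "x \<in> B \<Longrightarrow> y \<le> x \<Longrightarrow> \<exists>k. (cyclic_pred B ^^ k) x = y"
proof (induction x rule: less_induct)
  case (less x)
  show ?case
  proof (cases "x = y")
    case True
    then show ?thesis
      by (metis funpow_0)
  next
    case False
    then have "y < x"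
      using less.prems(2) by simp
    moreover have "Min B \<le> y"
      using B by simp
    ultimately have "x \<noteq> Min B"
      by auto
    then have "cyclic_pred B x \<in> B" "cyclic_pred B x < x" "y \<le> cyclic_pred B x"
      using cyclic_pred_below[OF B(1) less.prems(1)] B(2) \<open>y < x\<close> by auto
    then obtain k where "(cyclic_pred B ^^ k) (cyclic_pred B x) = y"
      using less.IH by blast
    then have "(cyclic_pred B ^^ Suc k) x = y"
      by (simp only: funpow_Suc_right comp_apply)
    then show ?thesis ..
  qed
qed

lemma cyclic_pred_reaches:
  assumes B: "finite B" "x \<in> B" "y \<in> B"
  shows "\<exists>k. (cyclic_pred B ^^ k) x = y"
proof -
  have "B \<noteq> {}"
    using B by auto
  obtain k where k: "(cyclic_pred B ^^ k) x = Min B"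
    using cyclic_pred_reaches_below[of B "Min B" x] B \<open>B \<noteq> {}\<close> by auto
  obtain l where l: "(cyclic_pred B ^^ l) (Max B) = y"
    using cyclic_pred_reaches_below[of B y "Max B"] B \<open>B \<noteq> {}\<close> by auto
  have "(cyclic_pred B ^^ Suc k) x = Max B"
    using k by (simp add: cyclic_pred_Min)
  then have "(cyclic_pred B ^^ (l + Suc k)) x = y"
    using l by (simp only: funpow_add comp_apply)
  then show ?thesis ..
qed

lemma funpow_reaches_closed:
  assumes "(f ^^ k) x = y" "x \<in> S" and closed: "\<And>z. z \<in> S \<Longrightarrow> z \<noteq> y \<Longrightarrow> f z \<in> S"
  shows "y \<in> S"
  using assms(1,2)
proof (induction k arbitrary: x)
  case 0
  then show ?case by simp
next
  case (Suc k)
  show ?case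
  proof (cases "x = y")
    case True
    with Suc.prems(2) show ?thesis by simp
  next
    case False
    have "(f ^^ k) (f x) = y"
      using Suc.prems(1) by (simp only: funpow_Suc_right comp_apply)
    moreover have "f x \<in> S"
      using closed Suc.prems(2) False by blast
    ultimately show ?thesis
      by (rule Suc.IH)
  qed
qed

lemma cyclic_pred_closed_reaches:
  assumes B: "finite B" "x \<in> B \<inter> S" "y \<in> B"
    and closed: "\<And>z. z \<in> B \<inter> S \<Longrightarrow> z \<noteq> y \<Longrightarrow> cyclic_pred B z \<in> S"
  shows "y \<in> S"
proof -
  obtain k where "(cyclic_pred B ^^ k) x = y"
    using cyclic_pred_reaches[OF B(1) _ B(3)] B(2) by blast
  then have "y \<in> B \<inter> S"
    using B(2) by (rule funpow_reaches_closed) (use closed cyclic_pred_in[OF B(1)] in blast)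
  then show ?thesis
    by simp
qed

lemma part_perm_outside: "x \<notin> {1..n} \<Longrightarrow> part_perm n P x = x"
  unfolding part_perm_def by (simp only: if_False)

lemma part_perm_eq_cyclic_pred:
  assumes "partition_on {1..n} P" "B \<in> P" "x \<in> B"
  shows "part_perm n P x = cyclic_pred B x"
proof -
  have "x \<in> {1..n}"
    using assms partition_onD1 by blast
  then show ?thesis
    using partition_on_the_block[OF assms] by (simp add: part_perm_def cyclic_pred_def)
qed

lemma part_perm_in_block:
  assumes "partition_on {1..n} P" "B \<in> P" "x \<in> B"
  shows "part_perm n P x \<in> B"
  using part_perm_eq_cyclic_pred[OF assms]
    cyclic_pred_in[OF partition_on_finite_block[OF _ assms(1,2)] assms(3)] by simp

lemma part_perm_Suc:
  assumes "partition_on {1..n} P" "B \<in> P" "i \<in> B" "Suc i \<in> B"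
  shows "part_perm n P (Suc i) = i"
  using part_perm_eq_cyclic_pred[OF assms(1,2,4)]
    cyclic_pred_Suc[OF partition_on_finite_block[OF _ assms(1,2)] assms(3,4)] by simp

lemma part_perm_merge_adjacent:
  assumes P: "partition_on {1..n} P" and i: "{i} \<in> P" and C: "C \<in> P" "Suc i \<in> C"
  shows "part_perm n (merge_blocks P {i} C) = part_perm n P \<circ> s i"
proof
  fix x
  let ?Q = "merge_blocks P {i} C"
  have Q: "partition_on {1..n} ?Q"
    using partition_on_merge_blocks[OF P i C(1)] .
  have M: "insert i C \<in> ?Q"
    unfolding merge_blocks_def by simp
  have iC: "i \<notin> C"
    using partition_on_block_eq[OF P i C(1)] C(2) by auto
  have finC: "finite C"
    using partition_on_finite_block[OF _ P C(1)] by simp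
  have "x \<notin> {1..n} \<or> x \<in> insert i C \<or> (\<exists>E\<in>P - {{i}, C}. x \<in> E)"
    using partition_on_block_exists[OF P, of x] by auto
  then consider "x \<notin> {1..n}" | "x \<in> insert i C" | E where "E \<in> P - {{i}, C}" "x \<in> E"
    by blast
  then show "part_perm n ?Q x = (part_perm n P \<circ> s i) x"
  proof cases
    case 1
    moreover have "i \<in> {1..n}" "Suc i \<in> {1..n}"
      using partition_onD1[OF P] i C by auto
    ultimately show ?thesis
      by (auto simp: part_perm_outside s_apply)
  next
    case 2
    moreover have "part_perm n P i = i"
      using part_perm_eq_cyclic_pred[OF P i] by (simp add: cyclic_pred_def)
    moreover have "s i x \<in> C" if "x \<noteq> Suc i"
      using 2 that C(2) iC by (cases "x = i") (auto simp: s_apply)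
    ultimately show ?thesis
      using part_perm_eq_cyclic_pred[OF Q M 2] part_perm_eq_cyclic_pred[OF P C(1)]
        cyclic_pred_insert_adjacent_eq[OF finC iC C(2) 2] by (auto simp: s_apply)
  next
    case 3
    then have "E \<in> P" "E \<in> ?Q" "x \<noteq> i" "x \<noteq> Suc i"
      using partition_on_block_eq[OF P, of E _ x] i C unfolding merge_blocks_def by auto
    then show ?thesis
      using part_perm_eq_cyclic_pred[OF Q \<open>E \<in> ?Q\<close> 3(2)] part_perm_eq_cyclic_pred[OF P \<open>E \<in> P\<close> 3(2)]
      by (simp add: s_apply)
  qed
qed

lemma part_perm_comp_s_fixes_or_pred:
  assumes P: "partition_on {1..n} P" and Q: "partition_on {1..n} Q"
    and comp: "part_perm n P \<circ> s i = part_perm n Q" and i: "1 \<le> i" "i < n"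
  shows "part_perm n P i = i \<or> part_perm n P (Suc i) = i"
proof (rule ccontr)
  let ?\<sigma> = "part_perm n P" and ?\<tau> = "part_perm n Q"
  assume "\<not> (?\<sigma> i = i \<or> ?\<sigma> (Suc i) = i)"
  then have not_fixed: "?\<sigma> i \<noteq> i" and not_pred: "?\<sigma> (Suc i) \<noteq> i"
    by auto
  have "?\<tau> x = ?\<sigma> (s i x)" for x
    using comp by (metis comp_apply)
  then have \<tau>_i: "?\<tau> i = ?\<sigma> (Suc i)" and \<tau>_Suc_i: "?\<tau> (Suc i) = ?\<sigma> i"
    and \<tau>_other: "\<And>z. z \<noteq> i \<Longrightarrow> z \<noteq> Suc i \<Longrightarrow> ?\<tau> z = ?\<sigma> z"
    by (simp_all add: s_apply)
  obtain C where C: "C \<in> P" "Suc i \<in> C"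
    using partition_on_block_exists[OF P, of "Suc i"] i by auto
  obtain D where D: "D \<in> Q" "i \<in> D"
    using partition_on_block_exists[OF Q, of i] i by auto
  have iC: "i \<notin> C"
    using not_pred part_perm_Suc[OF P C(1) _ C(2)] by auto
  have "Suc i \<in> D"
  proof (rule cyclic_pred_closed_reaches[OF _ _ C(2)])
    show "finite C"
      using partition_on_finite_block[OF _ P C(1)] by simp
    show "?\<sigma> (Suc i) \<in> C \<inter> D"
      using \<tau>_i part_perm_in_block[OF Q D] part_perm_in_block[OF P C] by simp
    fix z assume z: "z \<in> C \<inter> D" "z \<noteq> Suc i"
    then have "z \<noteq> i"
      using iC by auto
    have "cyclic_pred C z = ?\<sigma> z"
      using part_perm_eq_cyclic_pred[OF P C(1)] z by simp
    also have "\<dots> = ?\<tau> z"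
      using \<tau>_other \<open>z \<noteq> i\<close> z(2) by simp
    finally show "cyclic_pred C z \<in> D"
      using part_perm_in_block[OF Q D(1)] z by simp
  qed
  then have "?\<tau> (Suc i) = i"
    using part_perm_Suc[OF Q D] by simp
  then show False
    using \<tau>_Suc_i not_fixed by simp
qed

lemma comp_s_in_NC_if_fixed:
  assumes P: "nc_partition n P" and fixed: "part_perm n P i = i" and i: "1 \<le> i" "i < n"
  shows "part_perm n P \<circ> s i \<in> NC n"
proof -
  have part: "partition_on {1..n} P" and nc: "noncrossing P"
    using P by (simp_all add: nc_partition_def)
  obtain B where B: "B \<in> P" "i \<in> B"
    using partition_on_block_exists[OF part, of i] i by auto
  then have "B = {i}"
    using fixed part_perm_eq_cyclic_pred[OF part B]
      cyclic_pred_fixed[OF partition_on_finite_block[OF _ part B(1)] B(2)] by simp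
  then have singleton: "{i} \<in> P"
    using B(1) by simp
  obtain C where C: "C \<in> P" "Suc i \<in> C"
    using partition_on_block_exists[OF part, of "Suc i"] i by auto
  have "nc_partition n (merge_blocks P {i} C)"
    using partition_on_merge_blocks[OF part singleton C(1)] noncrossing_merge_adjacent[OF part nc singleton C]
    by (simp add: nc_partition_def)
  then show ?thesis
    unfolding NC_def using part_perm_merge_adjacent[OF part singleton C, symmetric] by blast
qed

lemma comp_s_in_NC_if_pred:
  assumes P: "nc_partition n P" and pred: "part_perm n P (Suc i) = i" and i: "i < n"
  shows "part_perm n P \<circ> s i \<in> NC n"
proof -
  have part: "partition_on {1..n} P" and nc: "noncrossing P"
    using P by (simp_all add: nc_partition_def)
  obtain C where C: "C \<in> P" "Suc i \<in> C"
    using partition_on_block_exists[OF part, of "Suc i"] i by auto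
  have "i \<in> C"
    using pred part_perm_in_block[OF part C] by simp
  then have piece: "{i} \<subseteq> C" "{i} \<noteq> {}" "{i} \<noteq> C"
    using C(2) by auto
  let ?Q = "split_block P C {i}"
  have Q: "partition_on {1..n} ?Q"
    using partition_on_split_block[OF part C(1) piece] .
  have "nc_partition n ?Q"
    using Q noncrossing_split_singleton[OF nc C(1)] by (simp add: nc_partition_def)
  moreover have "part_perm n P = part_perm n ?Q \<circ> s i"
  proof -
    have "{i} \<in> ?Q" "C - {i} \<in> ?Q" "Suc i \<in> C - {i}"
      using C(2) unfolding split_block_def by auto
    then show ?thesis
      using part_perm_merge_adjacent[OF Q] merge_split_block[OF part C(1) piece] by metis
  qed
  then have "part_perm n P \<circ> s i = part_perm n ?Q"
    by (simp add: comp_assoc s_def)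
  ultimately show ?thesis
    unfolding NC_def by auto
qed

theorem lemma7p4:
  fixes n i :: nat and \<sigma> :: "nat \<Rightarrow> nat"
  assumes "n \<ge> 2" and "\<sigma> \<in> NC n" and "1 \<le> i" and "i < n"
  shows "\<sigma> \<circ> s i \<in> NC n \<longleftrightarrow> i \<in> {\<sigma> i, \<sigma> (i + 1)}"
proof -
  obtain P where P: "nc_partition n P" and \<sigma>: "\<sigma> = part_perm n P"
    using assms(2) unfolding NC_def by blast
  show ?thesis
  proof
    assume "\<sigma> \<circ> s i \<in> NC n"
    then obtain Q where "nc_partition n Q" "\<sigma> \<circ> s i = part_perm n Q"
      unfolding NC_def by blast
    then show "i \<in> {\<sigma> i, \<sigma> (i + 1)}"
      using part_perm_comp_s_fixes_or_pred[of n P Q i] P \<sigma> assms(3,4)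
      by (auto simp: nc_partition_def)
  next
    assume "i \<in> {\<sigma> i, \<sigma> (i + 1)}"
    then show "\<sigma> \<circ> s i \<in> NC n"
      using comp_s_in_NC_if_fixed[OF P _ assms(3,4)] comp_s_in_NC_if_pred[OF P _ assms(4)] \<sigma>
      by auto
  qed
qed

end
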